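(* Suppose $\mu(f)<0$ and for some $\delta\in(0,1]$ and every $x\in E$ \[\bar{\gamma}(x)=\sup_{\tau} \liminf_{T \to \infty} \mathbb{E}^x \Big\{(1-\delta)\mu(f)(\tau \wedge T)-q(X_{\tau \wedge T}) \Big\} < \infty,\] where the supremum is over stopping times $\tau$. Then for every $x\in E$, with $d(x)=\delta\mu(f)<0$, \[ \gamma (x) = \sup_{\tau} \liminf_{T \to \infty} \mathbb{E}^x \Big\{ \int_0^{\tau \wedge T} \big(f(X_s) - d(x)\big) ds \Big\} < \infty. \]
   Context: Let $(X_t)$ be a Feller–Markov process on $(\Omega,F,(F_t))$ with values in a locally compact metric space $E$ with Borel $\sigma$-field, with laws $\mathbb{P}^x$ and expectations $\mathbb{E}^x$ when started at $x$, and transition semigroup $P_t$. Assume (A1) weak Feller property: $P_t\,\mathcal{C}_0\subseteq\mathcal{C}_0$, where $\mathcal{C}_0$ is the space of continuous bounded functions on $E$ vanishing at infinity; and (A2): there is a unique probability measure $\mu$ on $E$, a function $K:E\to(0,\infty)$ bounded on compacts and $h:[0,\infty)\to\mathbb{R}_+$ with $\int_0^\infty h(t)dt<\infty$ such that $\|P_t(x,\cdot)-\mu(\cdot)\|_{TV}\le K(x)h(t)$ for all $x$, and $\mathbb{E}^x\{K(X_T)\}<\infty$ for each $T\ge0$. Let $f$ be a continuous bounded function, $\mu(f)=\int_E f\,d\mu$, and let $q(x)=\mathbb{E}^x\{\int_0^\infty (f(X_t)-\mu(f))dt\}$ be the centred zero-potential of $f$; under (A1)–(A2), $q$ is continuous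 and for any bounded stopping time $\tau$, $q(x)=\mathbb{E}^x\{\int_0^\tau(f(X_t)-\mu(f))dt+q(X_\tau)\}$. *)

theory Defs
  imports "HOL-Probability.Probability"
begin

definition C0 :: "('e::metric_space \<Rightarrow> real) \<Rightarrow> bool" where
  "C0 g \<longleftrightarrow> continuous_on UNIV g \<and> bounded (range g) \<and>
     (\<forall>e>0. \<exists>K. compact K \<and> (\<forall>y. y \<notin> K \<longrightarrow> \<bar>g y\<bar> < e))"

definition tv_dist :: "'e::metric_space measure \<Rightarrow> 'e measure \<Rightarrow> real" where
  "tv_dist p q = (SUP A \<in> sets borel. \<bar>measure p A - measure q A\<bar>)"

definition markov_process ::
  "'w measure \<Rightarrow> (real \<Rightarrow> 'w measure) \<Rightarrow> ('e::metric_space \<Rightarrow> 'w measure) \<Rightarrow> (real \<Rightarrow> 'w \<Rightarrow> 'e) \<Rightarrow> bool"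
where
  "markov_process M F Px X \<longleftrightarrow>
     (\<forall>t. space (F t) = space M \<and> sets (F t) \<subseteq> sets M) \<and>
     (\<forall>s t. s \<le> t \<longrightarrow> sets (F s) \<subseteq> sets (F t)) \<and>
     (\<forall>x. prob_space (Px x) \<and> sets (Px x) = sets M) \<and>
     (\<forall>t\<ge>0. X t \<in> F t \<rightarrow>\<^sub>M borel) \<and>
     ((\<lambda>(t, \<omega>). X t \<omega>) \<in> (lborel \<Otimes>\<^sub>M M) \<rightarrow>\<^sub>M borel) \<and>
     (\<forall>\<omega>\<in>space M. \<forall>t\<ge>0. continuous (at_right t) (\<lambda>s. X s \<omega>)) \<and>
     (\<forall>x. AE \<omega> in Px x. X 0 \<omega> = x) \<and>
     (\<forall>x s t A (g::'e \<Rightarrow> real). 0 \<le> s \<longrightarrow> 0 \<le> t \<longrightarrow> A \<in> sets (F t) \<longrightarrow>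
        g \<in> borel_measurable borel \<longrightarrow> bounded (range g) \<longrightarrow>
        (\<integral>\<omega>. indicator A \<omega> * g (X (t + s) \<omega>) \<partial>Px x) =
        (\<integral>\<omega>. indicator A \<omega> * (\<integral>\<omega>'. g (X s \<omega>') \<partial>Px (X t \<omega>)) \<partial>Px x))"

definition trans :: "('e \<Rightarrow> 'w measure) \<Rightarrow> (real \<Rightarrow> 'w \<Rightarrow> 'e::metric_space) \<Rightarrow> real \<Rightarrow> 'e \<Rightarrow> 'e measure" where
  "trans Px X t x = distr (Px x) borel (X t)"

definition weak_feller :: "('e::metric_space \<Rightarrow> 'w measure) \<Rightarrow> (real \<Rightarrow> 'w \<Rightarrow> 'e) \<Rightarrow> bool" where
  "weak_feller Px X \<longleftrightarrow> (\<forall>t\<ge>0. \<forall>g. C0 g \<longrightarrow> C0 (\<lambda>x. \<integral>y. g y \<partial>trans Px X t x))"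

definition ergodic_bound ::
  "('e::metric_space \<Rightarrow> 'w measure) \<Rightarrow> (real \<Rightarrow> 'w \<Rightarrow> 'e) \<Rightarrow> 'e measure \<Rightarrow> ('e \<Rightarrow> real) \<Rightarrow> (real \<Rightarrow> real) \<Rightarrow> bool"
where
  "ergodic_bound Px X \<mu> K h \<longleftrightarrow>
     prob_space \<mu> \<and> sets \<mu> = sets borel \<and>
     (\<forall>x. 0 < K x) \<and> (\<forall>C. compact C \<longrightarrow> bounded (K ` C)) \<and>
     (\<forall>t. 0 \<le> h t) \<and> set_integrable lborel {0..} h \<and>
     (\<forall>x t. 0 \<le> t \<longrightarrow> tv_dist (trans Px X t x) \<mu> \<le> K x * h t) \<and>
     (\<forall>x T. 0 \<le> T \<longrightarrow> (\<integral>\<^sup>+\<omega>. ennreal (K (X T \<omega>)) \<partial>Px x) < \<infinity>)"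

definition stopping_time_R :: "'w measure \<Rightarrow> (real \<Rightarrow> 'w measure) \<Rightarrow> ('w \<Rightarrow> ereal) \<Rightarrow> bool" where
  "stopping_time_R M F \<tau> \<longleftrightarrow> (\<forall>\<omega>\<in>space M. 0 \<le> \<tau> \<omega>) \<and>
     (\<forall>t\<ge>0. Measurable.pred (F t) (\<lambda>\<omega>. \<tau> \<omega> \<le> ereal t))"

definition bounded_stopping_time :: "'w measure \<Rightarrow> (real \<Rightarrow> 'w measure) \<Rightarrow> ('w \<Rightarrow> ereal) \<Rightarrow> bool" where
  "bounded_stopping_time M F \<tau> \<longleftrightarrow> stopping_time_R M F \<tau> \<and> (\<exists>c::real. \<forall>\<omega>\<in>space M. \<tau> \<omega> \<le> ereal c)"

definition stopped :: "('w \<Rightarrow> ereal) \<Rightarrow> real \<Rightarrow> 'w \<Rightarrow> real" where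
  "stopped \<tau> T \<omega> = real_of_ereal (min (\<tau> \<omega>) (ereal T))"

definition zero_potential ::
  "('e::metric_space \<Rightarrow> 'w measure) \<Rightarrow> (real \<Rightarrow> 'w \<Rightarrow> 'e) \<Rightarrow> 'e measure \<Rightarrow> ('e \<Rightarrow> real) \<Rightarrow> 'e \<Rightarrow> real"
where
  "zero_potential Px X \<mu> f x = (LBINT t:{0..}. (\<integral>\<omega>. f (X t \<omega>) \<partial>Px x) - integral\<^sup>L \<mu> f)"

definition gamma_bar ::
  "'w measure \<Rightarrow> (real \<Rightarrow> 'w measure) \<Rightarrow> ('e::metric_space \<Rightarrow> 'w measure) \<Rightarrow> (real \<Rightarrow> 'w \<Rightarrow> 'e) \<Rightarrow>
   'e measure \<Rightarrow> ('e \<Rightarrow> real) \<Rightarrow> real \<Rightarrow> 'e \<Rightarrow> ereal"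
where
  "gamma_bar M F Px X \<mu> f \<delta> x =
     (SUP \<tau> \<in> {\<tau>. stopping_time_R M F \<tau>}. Liminf at_top (\<lambda>T::real. ereal
        (\<integral>\<omega>. (1 - \<delta>) * integral\<^sup>L \<mu> f * stopped \<tau> T \<omega>
              - zero_potential Px X \<mu> f (X (stopped \<tau> T \<omega>) \<omega>) \<partial>Px x)))"

definition gamma ::
  "'w measure \<Rightarrow> (real \<Rightarrow> 'w measure) \<Rightarrow> ('e::metric_space \<Rightarrow> 'w measure) \<Rightarrow> (real \<Rightarrow> 'w \<Rightarrow> 'e) \<Rightarrow>
   ('e \<Rightarrow> real) \<Rightarrow> ('e \<Rightarrow> real) \<Rightarrow> 'e \<Rightarrow> ereal"
where
  "gamma M F Px X f d x =
     (SUP \<tau> \<in> {\<tau>. stopping_time_R M F \<tau>}. Liminf at_top (\<lambda>T::real. ereal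
        (\<integral>\<omega>. (LBINT s=0..stopped \<tau> T \<omega>. f (X s \<omega>) - d x) \<partial>Px x)))"

end

theory Submission
  imports Defs
begin

text \<open>
  For the bounded stopping time \<tau> \<and> T, Dynkin's identity for the centred zero-potential q reads
  E_x \<integral>[0, \<tau> \<and> T] (f - \<mu>(f)) = q(x) - E_x q(X(\<tau> \<and> T)). Lowering the integrand's shift from
  \<mu>(f) to \<delta> \<mu>(f) adds (1 - \<delta>) \<mu>(f) (\<tau> \<and> T) under the expectation, so the expression whose
  liminf defines \<gamma>(x) is q(x) plus the expression whose liminf defines \<gamma>-bar(x).
  Hence \<gamma>(x) \<le> q(x) + \<gamma>-bar(x) < \<infinity>.
\<close>

lemma interval_integrable_bounded:
  fixes \<phi> :: "real \<Rightarrow> real"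
  assumes [measurable]: "\<phi> \<in> borel_measurable borel" and bound: "\<And>s. \<bar>\<phi> s\<bar> \<le> C"
  shows "interval_lebesgue_integrable lborel (ereal a) (ereal b) \<phi>"
proof -
  have "set_integrable lborel A \<phi>" if "set_integrable lborel A (\<lambda>_. C)" and "A \<in> sets borel" for A
    using that(1) by (rule set_integrable_bound)
      (use that(2) bound in \<open>auto simp: set_borel_measurable_def intro: order_trans[OF _ abs_ge_self]\<close>)
  moreover have "interval_lebesgue_integrable lborel a b (\<lambda>_. C)" by simp
  ultimately show ?thesis unfolding interval_lebesgue_integrable_def by auto
qed

lemma abs_interval_integral_le:
  fixes \<phi> :: "real \<Rightarrow> real"
  assumes [measurable]: "\<phi> \<in> borel_measurable borel" and bound: "\<And>s. \<bar>\<phi> s\<bar> \<le> C"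
    and "a \<le> b"
  shows "\<bar>LBINT s=a..b. \<phi> s\<bar> \<le> C * (b - a)"
proof -
  have ab: "ereal a \<le> ereal b" using \<open>a \<le> b\<close> by simp
  have "\<bar>LBINT s=a..b. \<phi> s\<bar> \<le> (LBINT s=a..b. \<bar>\<phi> s\<bar>)"
    using interval_integral_norm[OF interval_integrable_bounded[OF assms(1,2)] ab] by simp
  also have "\<dots> \<le> (LBINT s=a..b. C)"
    unfolding interval_lebesgue_integral_le_eq[OF ab]
    using interval_integrable_bounded[of "\<lambda>s. \<bar>\<phi> s\<bar>" C a b] interval_integral_const(1)[of a b C]
    by (intro set_integral_mono) (auto simp: interval_lebesgue_integrable_def \<open>a \<le> b\<close> bound)
  also have "\<dots> = C * (b - a)" by simp
  finally show ?thesis .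
qed

lemma interval_integral_eq_lborel_integral:
  fixes \<phi> :: "real \<Rightarrow> real" and b :: real
  assumes "0 \<le> b"
  shows "(LBINT s=0..b. \<phi> s) = (\<integral>s. (if 0 < s \<and> s < b then \<phi> s else 0) \<partial>lborel)"
  using assms unfolding interval_lebesgue_integral_def set_lebesgue_integral_def einterval_def
  by (simp add: indicator_def) (rule Bochner_Integration.integral_cong; simp)

lemma ereal_stopped:
  assumes "\<tau> \<omega> \<noteq> -\<infinity>"
  shows "ereal (stopped \<tau> T \<omega>) = min (\<tau> \<omega>) (ereal T)"
  using assms unfolding stopped_def by (cases "\<tau> \<omega>") (auto simp: min_def)

lemma stopped_bounds:
  assumes "0 \<le> \<tau> \<omega>" and "0 \<le> T"
  shows "0 \<le> stopped \<tau> T \<omega>" and "stopped \<tau> T \<omega> \<le> T"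
  using assms unfolding stopped_def by (cases "\<tau> \<omega>"; auto simp: min_def)+

lemma stopping_time_stopped:
  assumes space_F: "\<And>t. space (F t) = space M"
    and st: "stopping_time_R M F \<tau>" and "0 \<le> T"
  shows "bounded_stopping_time M F (\<lambda>\<omega>. ereal (stopped \<tau> T \<omega>))"
  unfolding bounded_stopping_time_def stopping_time_R_def
proof (intro conjI ballI allI impI exI[of _ T])
  fix \<omega> assume "\<omega> \<in> space M"
  then have "0 \<le> \<tau> \<omega>" using st unfolding stopping_time_R_def by auto
  then show "0 \<le> ereal (stopped \<tau> T \<omega>)" "ereal (stopped \<tau> T \<omega>) \<le> ereal T"
    using stopped_bounds[OF _ \<open>0 \<le> T\<close>] by auto
next
  fix t :: real assume "0 \<le> t"
  then have [measurable]: "Measurable.pred (F t) (\<lambda>\<omega>. \<tau> \<omega> \<le> ereal t)"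
    using st unfolding stopping_time_R_def by auto
  have "(ereal (stopped \<tau> T \<omega>) \<le> ereal t) \<longleftrightarrow> \<tau> \<omega> \<le> ereal t \<or> T \<le> t"
    if "\<omega> \<in> space (F t)" for \<omega>
    using that st space_F unfolding stopping_time_R_def
    by (subst ereal_stopped) (auto simp: min_le_iff_disj)
  then show "Measurable.pred (F t) (\<lambda>\<omega>. ereal (stopped \<tau> T \<omega>) \<le> ereal t)"
    by (subst measurable_cong[where g="\<lambda>\<omega>. \<tau> \<omega> \<le> ereal t \<or> T \<le> t"]) simp_all
qed

lemma borel_measurable_stopped:
  assumes space_F: "\<And>t. space (F t) = space M" and sets_F: "\<And>t. sets (F t) \<subseteq> sets M"
    and st: "stopping_time_R M F \<tau>" and "0 \<le> T"
  shows "stopped \<tau> T \<in> borel_measurable M"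
proof (rule borel_measurableI_le)
  fix y :: real
  have nonneg: "0 \<le> \<tau> \<omega>" if "\<omega> \<in> space M" for \<omega>
    using st that unfolding stopping_time_R_def by auto
  note bounds = stopped_bounds[of \<tau>, OF nonneg \<open>0 \<le> T\<close>]
  consider "y < 0" | "T \<le> y" | "0 \<le> y" "y < T" by linarith
  then show "{\<omega> \<in> space M. stopped \<tau> T \<omega> \<le> y} \<in> sets M"
  proof cases
    case 1
    then have "{\<omega> \<in> space M. stopped \<tau> T \<omega> \<le> y} = {}"
      using bounds(1) by force
    then show ?thesis by (metis sets.empty_sets)
  next
    case 2
    then have "{\<omega> \<in> space M. stopped \<tau> T \<omega> \<le> y} = space M"
      using bounds(2) by force
    then show ?thesis by (metis sets.top)
  next
    case 3
    have "stopped \<tau> T \<omega> \<le> y \<longleftrightarrow> \<tau> \<omega> \<le> ereal y" if "\<omega> \<in> space M" for \<omega>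
    proof -
      have "stopped \<tau> T \<omega> \<le> y \<longleftrightarrow> min (\<tau> \<omega>) (ereal T) \<le> ereal y"
        using nonneg[OF that] by (simp flip: ereal_stopped)
      then show ?thesis using \<open>y < T\<close> by (simp add: min_le_iff_disj)
    qed
    then have "{\<omega> \<in> space M. stopped \<tau> T \<omega> \<le> y} = {\<omega> \<in> space (F y). \<tau> \<omega> \<le> ereal y}"
      using space_F by auto
    moreover have "{\<omega> \<in> space (F y). \<tau> \<omega> \<le> ereal y} \<in> sets (F y)"
      using st \<open>0 \<le> y\<close> unfolding stopping_time_R_def pred_def by auto
    ultimately show ?thesis using sets_F by auto
  qed
qed

lemma borel_measurable_path:
  assumes "(\<lambda>(t, \<omega>). X t \<omega>) \<in> (lborel \<Otimes>\<^sub>M M) \<rightarrow>\<^sub>M borel" and "\<omega> \<in> space M"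
  shows "(\<lambda>s. X s \<omega>) \<in> borel_measurable borel"
  using measurable_compose[OF measurable_Pair2'[OF assms(2)] assms(1)] by simp

lemma borel_measurable_path_integral:
  fixes X :: "real \<Rightarrow> 'w \<Rightarrow> 'e::topological_space" and g :: "'e \<Rightarrow> real" and S :: "'w \<Rightarrow> real"
  assumes X: "(\<lambda>(t, \<omega>). X t \<omega>) \<in> (lborel \<Otimes>\<^sub>M M) \<rightarrow>\<^sub>M borel"
    and [measurable]: "g \<in> borel_measurable borel" "S \<in> borel_measurable M"
    and S_nonneg: "\<And>\<omega>. \<omega> \<in> space M \<Longrightarrow> 0 \<le> S \<omega>"
  shows "(\<lambda>\<omega>. LBINT s=0..S \<omega>. g (X s \<omega>)) \<in> borel_measurable M"
proof -
  have [measurable]: "(\<lambda>p. X (snd p) (fst p)) \<in> (M \<Otimes>\<^sub>M lborel) \<rightarrow>\<^sub>M borel"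
    using measurable_compose[OF measurable_Pair[OF measurable_snd measurable_fst] X] by simp
  have "(\<lambda>(\<omega>, s). if 0 < s \<and> s < S \<omega> then g (X s \<omega>) else 0) \<in> borel_measurable (M \<Otimes>\<^sub>M lborel)"
    unfolding case_prod_beta by measurable
  then have "(\<lambda>\<omega>. \<integral>s. (if 0 < s \<and> s < S \<omega> then g (X s \<omega>) else 0) \<partial>lborel) \<in> borel_measurable M"
    by (rule lborel.borel_measurable_lebesgue_integral)
  then show ?thesis
    by (rule measurable_cong[THEN iffD1, rotated])
       (simp add: interval_integral_eq_lborel_integral S_nonneg)
qed

lemma integrable_path_integral:
  fixes X :: "real \<Rightarrow> 'w \<Rightarrow> 'e::topological_space" and g :: "'e \<Rightarrow> real" and S :: "'w \<Rightarrow> real"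
  assumes X: "(\<lambda>(t, \<omega>). X t \<omega>) \<in> (lborel \<Otimes>\<^sub>M M) \<rightarrow>\<^sub>M borel"
    and P: "finite_measure P" "sets P = sets M"
    and g: "g \<in> borel_measurable borel" and g_bound: "\<And>y. \<bar>g y\<bar> \<le> C"
    and S: "S \<in> borel_measurable M" and S_bounds: "\<And>\<omega>. \<omega> \<in> space M \<Longrightarrow> 0 \<le> S \<omega> \<and> S \<omega> \<le> T"
  shows "integrable P (\<lambda>\<omega>. LBINT s=0..S \<omega>. g (X s \<omega>))"
proof (rule finite_measure.integrable_const_bound[OF P(1), where B="C * T"])
  have "space P = space M" using P(2) by (rule sets_eq_imp_space_eq)
  show "AE \<omega> in P. norm (LBINT s=0..S \<omega>. g (X s \<omega>)) \<le> C * T"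
  proof (rule AE_I2)
    fix \<omega> assume "\<omega> \<in> space P"
    then have \<omega>: "\<omega> \<in> space M" using \<open>space P = space M\<close> by simp
    have "(\<lambda>s. g (X s \<omega>)) \<in> borel_measurable borel"
      using borel_measurable_path[OF X \<omega>] g by measurable
    then have "\<bar>LBINT s=0..S \<omega>. g (X s \<omega>)\<bar> \<le> C * (S \<omega> - 0)"
      using abs_interval_integral_le[of "\<lambda>s. g (X s \<omega>)" C 0 "S \<omega>"] S_bounds[OF \<omega>] g_bound
      by (simp add: zero_ereal_def)
    also have "\<dots> \<le> C * T"
      using S_bounds[OF \<omega>] order_trans[OF abs_ge_zero g_bound] by (intro mult_left_mono) auto
    finally show "norm (LBINT s=0..S \<omega>. g (X s \<omega>)) \<le> C * T" by simp
  qed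
  show "(\<lambda>\<omega>. LBINT s=0..S \<omega>. g (X s \<omega>)) \<in> borel_measurable P"
    using borel_measurable_path_integral[OF X g S] S_bounds measurable_cong_sets[OF P(2) refl]
    by auto
qed

lemma expectation_stopped_integral_eq:
  fixes M :: "'w measure" and Px :: "'e::metric_space \<Rightarrow> 'w measure" and X :: "real \<Rightarrow> 'w \<Rightarrow> 'e"
    and \<mu> :: "'e measure" and f :: "'e \<Rightarrow> real"
  defines "c \<equiv> integral\<^sup>L \<mu> f" and "q \<equiv> zero_potential Px X \<mu> f"
  assumes markov: "markov_process M F Px X"
    and f_meas: "f \<in> borel_measurable borel" and f_bdd: "bounded (range f)"
    and q_dynkin: "\<And>x \<tau>. bounded_stopping_time M F \<tau> \<Longrightarrow>
       has_bochner_integral (Px x)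
         (\<lambda>\<omega>. (LBINT t=0..real_of_ereal (\<tau> \<omega>). f (X t \<omega>) - c) + q (X (real_of_ereal (\<tau> \<omega>)) \<omega>))
         (q x)"
    and st: "stopping_time_R M F \<tau>" and "0 \<le> T"
  shows "(\<integral>\<omega>. (LBINT s=0..stopped \<tau> T \<omega>. f (X s \<omega>) - \<delta> * c) \<partial>Px x)
     = q x + (\<integral>\<omega>. (1 - \<delta>) * c * stopped \<tau> T \<omega> - q (X (stopped \<tau> T \<omega>) \<omega>) \<partial>Px x)"
proof -
  define S where "S = stopped \<tau> T"
  define G where "G \<omega> = (LBINT s=0..S \<omega>. f (X s \<omega>) - \<delta> * c)" for \<omega>
  define D where "D \<omega> = (LBINT s=0..S \<omega>. f (X s \<omega>) - c) + q (X (S \<omega>) \<omega>)" for \<omega>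
  define R where "R \<omega> = (1 - \<delta>) * c * S \<omega> - q (X (S \<omega>) \<omega>)" for \<omega>
  obtain C where C: "\<And>y. \<bar>f y\<bar> \<le> C" using f_bdd unfolding bounded_real by auto
  have X: "(\<lambda>(t, \<omega>). X t \<omega>) \<in> (lborel \<Otimes>\<^sub>M M) \<rightarrow>\<^sub>M borel"
    and space_F: "\<And>t. space (F t) = space M" and sets_F: "\<And>t. sets (F t) \<subseteq> sets M"
    and P: "prob_space (Px x)" "sets (Px x) = sets M"
    using markov unfolding markov_process_def by auto
  have space_P: "space (Px x) = space M" using P(2) by (rule sets_eq_imp_space_eq)
  have S_bounds: "0 \<le> S \<omega> \<and> S \<omega> \<le> T" if "\<omega> \<in> space M" for \<omega>
    using st that stopped_bounds[of \<tau> \<omega> T] \<open>0 \<le> T\<close> unfolding S_def stopping_time_R_def by auto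
  have S_meas: "S \<in> borel_measurable M"
    unfolding S_def using space_F sets_F st \<open>0 \<le> T\<close> by (rule borel_measurable_stopped)
  have "\<bar>f y - \<delta> * c\<bar> \<le> C + \<bar>\<delta> * c\<bar>" for y
    using C[of y] by linarith
  then have G_int: "integrable (Px x) G"
    unfolding G_def
    using f_meas S_meas S_bounds
    by (intro integrable_path_integral[OF X prob_space.finite_measure[OF P(1)] P(2)]) auto
  have D: "has_bochner_integral (Px x) D (q x)"
    using q_dynkin[OF stopping_time_stopped[OF space_F st \<open>0 \<le> T\<close>], of x]
    unfolding D_def S_def by simp
  have G_split: "G \<omega> = D \<omega> + R \<omega>" if "\<omega> \<in> space M" for \<omega>
  proof -
    have "interval_lebesgue_integrable lborel 0 (ereal (S \<omega>)) (\<lambda>s. f (X s \<omega>))"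
      using interval_integrable_bounded[of "\<lambda>s. f (X s \<omega>)" C 0 "S \<omega>"] borel_measurable_path[OF X that]
        f_meas C by (simp add: zero_ereal_def)
    then show ?thesis
      unfolding G_def D_def R_def by (simp add: zero_ereal_def algebra_simps)
  qed
  have R_int: "integrable (Px x) R"
    using Bochner_Integration.integrable_diff[OF G_int integrable.intros[OF D]]
    by (rule Bochner_Integration.integrable_cong[THEN iffD1, rotated 2]) (auto simp: G_split space_P)
  have "integral\<^sup>L (Px x) G = (\<integral>\<omega>. D \<omega> + R \<omega> \<partial>Px x)"
    by (rule Bochner_Integration.integral_cong) (simp_all add: G_split space_P)
  also have "\<dots> = q x + integral\<^sup>L (Px x) R"
    using D R_int by (simp add: has_bochner_integral_iff)
  finally show ?thesis unfolding G_def R_def S_def .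
qed

lemma gamma_le_zero_potential_plus_gamma_bar:
  fixes M :: "'w measure" and Px :: "'e::metric_space \<Rightarrow> 'w measure" and X :: "real \<Rightarrow> 'w \<Rightarrow> 'e"
    and \<mu> :: "'e measure" and f :: "'e \<Rightarrow> real"
  defines "c \<equiv> integral\<^sup>L \<mu> f" and "q \<equiv> zero_potential Px X \<mu> f"
  assumes markov: "markov_process M F Px X"
    and f_meas: "f \<in> borel_measurable borel" and f_bdd: "bounded (range f)"
    and q_dynkin: "\<And>x \<tau>. bounded_stopping_time M F \<tau> \<Longrightarrow>
       has_bochner_integral (Px x)
         (\<lambda>\<omega>. (LBINT t=0..real_of_ereal (\<tau> \<omega>). f (X t \<omega>) - c) + q (X (real_of_ereal (\<tau> \<omega>)) \<omega>))
         (q x)"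
  shows "gamma M F Px X f (\<lambda>_. \<delta> * c) x \<le> ereal (q x) + gamma_bar M F Px X \<mu> f \<delta> x"
  unfolding gamma_def
proof (rule SUP_least)
  fix \<tau> assume "\<tau> \<in> {\<tau>. stopping_time_R M F \<tau>}"
  then have st: "stopping_time_R M F \<tau>" by simp
  define B where "B T = (\<integral>\<omega>. (1 - \<delta>) * c * stopped \<tau> T \<omega> - q (X (stopped \<tau> T \<omega>) \<omega>) \<partial>Px x)" for T
  have "Liminf at_top (\<lambda>T. ereal (\<integral>\<omega>. (LBINT s=0..stopped \<tau> T \<omega>. f (X s \<omega>) - \<delta> * c) \<partial>Px x))
      = Liminf at_top (\<lambda>T. ereal (q x) + ereal (B T))"
    by (rule Liminf_eq, rule eventually_mono[OF eventually_ge_at_top[of 0]])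
       (simp add: B_def expectation_stopped_integral_eq[OF markov f_meas f_bdd q_dynkin[unfolded c_def q_def] st]
         c_def q_def)
  also have "\<dots> = ereal (q x) + Liminf at_top (\<lambda>T. ereal (B T))"
    by (rule Liminf_add_ereal_left) simp_all
  also have "\<dots> \<le> ereal (q x) + gamma_bar M F Px X \<mu> f \<delta> x"
    unfolding gamma_bar_def B_def c_def q_def by (intro add_left_mono SUP_upper) (simp add: st)
  finally show "Liminf at_top (\<lambda>T. ereal (\<integral>\<omega>. (LBINT s=0..stopped \<tau> T \<omega>. f (X s \<omega>) - \<delta> * c) \<partial>Px x))
      \<le> ereal (q x) + gamma_bar M F Px X \<mu> f \<delta> x" .
qed

theorem mainTheorem10:
  fixes M :: "'w measure" and F :: "real \<Rightarrow> 'w measure"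
    and Px :: "'e::metric_space \<Rightarrow> 'w measure" and X :: "real \<Rightarrow> 'w \<Rightarrow> 'e"
    and \<mu> :: "'e measure" and K :: "'e \<Rightarrow> real" and h :: "real \<Rightarrow> real"
    and f :: "'e \<Rightarrow> real" and \<delta> :: real
  assumes loc_compact: "locally_compact_space (euclidean :: 'e topology)"
    and markov: "markov_process M F Px X"
    and A1: "weak_feller Px X"
    and A2: "ergodic_bound Px X \<mu> K h"
    and A2_unique: "\<And>\<nu> K' h'. ergodic_bound Px X \<nu> K' h' \<Longrightarrow> \<nu> = \<mu>"
    and f_cont: "continuous_on UNIV f" and f_bdd: "bounded (range f)"
    and q_dynkin: "\<And>x \<tau>. bounded_stopping_time M F \<tau> \<Longrightarrow>
       has_bochner_integral (Px x)
         (\<lambda>\<omega>. (LBINT t=0..real_of_ereal (\<tau> \<omega>). f (X t \<omega>) - integral\<^sup>L \<mu> f)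
               + zero_potential Px X \<mu> f (X (real_of_ereal (\<tau> \<omega>)) \<omega>))
         (zero_potential Px X \<mu> f x)"
    and neg: "integral\<^sup>L \<mu> f < 0"
    and delta: "0 < \<delta>" "\<delta> \<le> 1"
    and gbar: "\<And>x. gamma_bar M F Px X \<mu> f \<delta> x < \<infinity>"
  shows "\<forall>x. gamma M F Px X f (\<lambda>_. \<delta> * integral\<^sup>L \<mu> f) x < \<infinity>"
proof
  \<comment> \<open>The remaining hypotheses (local compactness, (A1), (A2), the signs of \<open>\<mu>(f)\<close> and \<open>\<delta>\<close>) are
    what the paper needs to construct \<open>q\<close> and derive \<open>q_dynkin\<close>; given \<open>q_dynkin\<close> they are unused.\<close>
  fix x
  have f_meas: "f \<in> borel_measurable borel"
    using f_cont by (rule borel_measurable_continuous_onI)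
  have "gamma M F Px X f (\<lambda>_. \<delta> * integral\<^sup>L \<mu> f) x
      \<le> ereal (zero_potential Px X \<mu> f x) + gamma_bar M F Px X \<mu> f \<delta> x"
    by (rule gamma_le_zero_potential_plus_gamma_bar[OF markov f_meas f_bdd q_dynkin])
  also have "\<dots> < \<infinity>"
    using gbar[of x] by (cases "gamma_bar M F Px X \<mu> f \<delta> x") auto
  finally show "gamma M F Px X f (\<lambda>_. \<delta> * integral\<^sup>L \<mu> f) x < \<infinity>" .
qed

end
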